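(* Let ${\bf A},{\bf B}\in\mathbb C^{N\times N}$ be such that ${\bf Q}:={\bf A}\otimes\mathbb 1_N+\mathbb 1_N\otimes{\bf B}^{\rm T}$ is normal and invertible, and let $\mathbf C\in\mathbb C^{N\times N}$. Then the unique solution ${\bf X}$ of ${\bf A}{\bf X}+{\bf X}{\bf B}=\mathbf C$ is given by the (iterated, outer integral in $t$) integral $${\bf X}=\frac1{2\pi}\int_0^\infty{\rm d}t\int_{-\infty}^{\infty}{\rm d}\omega\int_{-\infty}^{\infty}{\rm d}\omega'\,e^{-(\omega^2+\omega'^2)/2}(\mathrm i\omega+\omega')\,e^{-\mathrm i\omega t{\bf A}_H-\mathrm i\omega't{\bf A}_S}\,\mathbf C\,e^{-\mathrm i\omega t{\bf B}_H-\mathrm i\omega't{\bf B}_S}.$$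
   Context: For a square matrix ${\bf M}$, ${\bf M}_H:=({\bf M}+{\bf M}^\dagger)/2$ and ${\bf M}_S:=({\bf M}-{\bf M}^\dagger)/(2\mathrm i)$, so ${\bf M}={\bf M}_H+\mathrm i{\bf M}_S$. ${\bf B}^{\rm T}$ is the transpose. *)

theory Defs
  imports "HOL-Analysis.Analysis"
begin

definition cadj :: "complex^'n^'m \<Rightarrow> complex^'m^'n" where
  "cadj M = (\<chi> i j. cnj (M $ j $ i))"

definition csc :: "complex \<Rightarrow> complex^'n^'m \<Rightarrow> complex^'n^'m" where
  "csc c M = (\<chi> i j. c * M $ i $ j)"

definition herm_part :: "complex^'n^'n \<Rightarrow> complex^'n^'n" where
  "herm_part M = csc (1/2) (M + cadj M)"

definition skew_part :: "complex^'n^'n \<Rightarrow> complex^'n^'n" where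
  "skew_part M = csc (1 / (2 * \<i>)) (M - cadj M)"

fun mpow :: "complex^'n^'n \<Rightarrow> nat \<Rightarrow> complex^'n^'n" where
  "mpow M 0 = mat 1"
| "mpow M (Suc k) = M ** mpow M k"

definition mexp :: "complex^'n^'n \<Rightarrow> complex^'n^'n" where
  "mexp M = (\<Sum>k. (1 / fact k) *\<^sub>R mpow M k)"

text \<open>Kronecker sum A (x) 1 + 1 (x) B^T, indexed by pairs: entry ((i,j),(k,l)) =
  A_ik delta_jl + delta_ik B^T_jl, with B^T_jl = B_lj.\<close>
definition kron_sum :: "complex^'n^'n \<Rightarrow> complex^'n^'n \<Rightarrow> complex^('n\<times>'n)^('n\<times>'n)" where
  "kron_sum A B = (\<chi> p q. A $ fst p $ fst q * (if snd p = snd q then 1 else 0)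
                                 + (if fst p = fst q then 1 else 0) * B $ snd q $ snd p)"

definition normal_mat :: "complex^'n^'n \<Rightarrow> bool" where
  "normal_mat M \<longleftrightarrow> M ** cadj M = cadj M ** M"

end

theory Submission
  imports Defs "HOL-Probability.Probability"
begin

text \<open>The Sylvester operator \<open>T X = A X + X B\<close>, i.e. the Kronecker sum acting on matrices, splits
  as \<open>T = P + j R\<close>, where \<open>P\<close> and \<open>R\<close> are the Sylvester operators of the Hermitian and
  skew-Hermitian parts and \<open>j\<close> is multiplication by \<open>i\<close>; then \<open>T\<^sup>* = P - j R\<close>, and \<open>T\<close> is
  normal exactly when \<open>P\<close> and \<open>R\<close> commute. In that case the integrand is the Gaussian weight
  times \<open>(\<omega>' + j \<omega>) exp (- j \<omega> t P) exp (- j \<omega>' t R) C\<close>, and the two inner integrals are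
  Gaussian integrals of operator exponentials: expanding the exponentials and integrating term
  by term against the Gaussian moments gives \<open>2 \<pi> t exp (- t\<^sup>2 T\<^sup>* T / 2) T\<^sup>* C\<close>. For
  \<open>C = T X\<close> this is \<open>2 \<pi>\<close> times the \<open>t\<close>-derivative of \<open>- exp (- t\<^sup>2 T\<^sup>* T / 2) X\<close>, and since
  invertibility of \<open>T\<close> makes \<open>T\<^sup>* T\<close> coercive, this decays like a Gaussian, so the outer
  integral over \<open>t \<ge> 0\<close> equals \<open>2 \<pi> X\<close>.\<close>

section \<open>Bounded endomorphisms of a Euclidean space as a Banach algebra\<close>

text \<open>Bounded linear maps carry no multiplication in the library; this copy of \<open>'v \<Rightarrow>\<^sub>L 'v\<close>,
  with composition as product, is a Banach algebra and so has an exponential.\<close>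

typedef (overloaded) 'v endo = "UNIV :: ('v::euclidean_space \<Rightarrow>\<^sub>L 'v) set"
  morphisms endo_blinfun Endo by auto

setup_lifting type_definition_endo

instantiation endo :: (euclidean_space) real_normed_algebra_1
begin

lift_definition norm_endo :: "'a endo \<Rightarrow> real" is norm .
lift_definition minus_endo :: "'a endo \<Rightarrow> 'a endo \<Rightarrow> 'a endo" is "(-)" .
lift_definition plus_endo :: "'a endo \<Rightarrow> 'a endo \<Rightarrow> 'a endo" is "(+)" .
lift_definition uminus_endo :: "'a endo \<Rightarrow> 'a endo" is uminus .
lift_definition zero_endo :: "'a endo" is 0 .
lift_definition one_endo :: "'a endo" is id_blinfun .
lift_definition times_endo :: "'a endo \<Rightarrow> 'a endo \<Rightarrow> 'a endo" is blinfun_compose .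
lift_definition scaleR_endo :: "real \<Rightarrow> 'a endo \<Rightarrow> 'a endo" is scaleR .

definition dist_endo :: "'a endo \<Rightarrow> 'a endo \<Rightarrow> real"
  where "dist_endo a b = norm (a - b)"

definition uniformity_endo :: "('a endo \<times> 'a endo) filter"
  where "uniformity_endo = (INF e\<in>{0 <..}. principal {(x, y). dist x y < e})"

definition open_endo :: "'a endo set \<Rightarrow> bool"
  where "open_endo S = (\<forall>x\<in>S. \<forall>\<^sub>F (x', y) in uniformity. x' = x \<longrightarrow> y \<in> S)"

definition sgn_endo :: "'a endo \<Rightarrow> 'a endo"
  where "sgn_endo x = scaleR (inverse (norm x)) x"

instance
proof
  fix x y z :: "'a endo" and a b :: real
  show "dist x y = norm (x - y)" by (simp add: dist_endo_def)
  show "sgn x = inverse (norm x) *\<^sub>R x" by (simp add: sgn_endo_def)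
  show "uniformity = (INF e\<in>{0 <..}. principal {(x, y::'a endo). dist x y < e})"
    by (simp add: uniformity_endo_def)
  show "open U = (\<forall>x\<in>U. \<forall>\<^sub>F (x', y) in uniformity. x' = x \<longrightarrow> y \<in> U)" for U :: "'a endo set"
    by (simp add: open_endo_def)
  show "x + y + z = x + (y + z)" by transfer (simp add: algebra_simps)
  show "x + y = y + x" by transfer (simp add: algebra_simps)
  show "0 + x = x" by transfer simp
  show "- x + x = 0" by transfer simp
  show "x - y = x + - y" by transfer simp
  show "a *\<^sub>R (x + y) = a *\<^sub>R x + a *\<^sub>R y" by transfer (simp add: algebra_simps)
  show "(a + b) *\<^sub>R x = a *\<^sub>R x + b *\<^sub>R x" by transfer (simp add: algebra_simps)
  show "a *\<^sub>R b *\<^sub>R x = (a * b) *\<^sub>R x" by transfer simp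
  show "1 *\<^sub>R x = x" by transfer simp
  show "(norm x = 0) = (x = 0)" by transfer simp
  show "norm (x + y) \<le> norm x + norm y" by transfer (rule norm_triangle_ineq)
  show "norm (a *\<^sub>R x) = \<bar>a\<bar> * norm x" by transfer simp
  show "x * y * z = x * (y * z)" by transfer (rule blinfun_eqI, simp)
  show "(x + y) * z = x * z + y * z"
    by transfer (rule blinfun_eqI, simp add: blinfun.bilinear_simps)
  show "x * (y + z) = x * y + x * z"
    by transfer (rule blinfun_eqI, simp add: blinfun.bilinear_simps)
  show "a *\<^sub>R x * y = a *\<^sub>R (x * y)"
    by transfer (rule blinfun_eqI, simp add: blinfun.bilinear_simps)
  show "x * a *\<^sub>R y = a *\<^sub>R (x * y)"
    by transfer (rule blinfun_eqI, simp add: blinfun.bilinear_simps)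
  show "1 * x = x" by transfer (rule blinfun_eqI, simp)
  show "x * 1 = x" by transfer (rule blinfun_eqI, simp)
  show "(0::'a endo) \<noteq> 1"
  proof transfer
    obtain b :: 'a where "b \<in> Basis" using nonempty_Basis by blast
    then have "blinfun_apply 0 b \<noteq> blinfun_apply id_blinfun b" by (simp add: nonzero_Basis)
    then show "0 \<noteq> (id_blinfun :: 'a \<Rightarrow>\<^sub>L 'a)" by metis
  qed
  show "norm (1::'a endo) = 1" by transfer (rule norm_blinfun_id)
  show "norm (x * y) \<le> norm x * norm y" by transfer (rule norm_blinfun_compose)
qed

end

instance endo :: (euclidean_space) banach
proof
  fix X :: "nat \<Rightarrow> 'a endo"
  have dist_blinfun: "dist (endo_blinfun a) (endo_blinfun b) = dist a b" for a b :: "'a endo"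
    by (simp add: dist_norm dist_endo_def norm_endo.rep_eq minus_endo.rep_eq)
  assume "Cauchy X"
  then have "Cauchy (\<lambda>n. endo_blinfun (X n))"
    unfolding Cauchy_def by (simp add: dist_blinfun)
  then obtain l where "(\<lambda>n. endo_blinfun (X n)) \<longlonglongrightarrow> l"
    using Cauchy_convergent convergent_def by blast
  then have "X \<longlonglongrightarrow> Endo l"
    unfolding tendsto_iff by (simp add: dist_blinfun[symmetric] Endo_inverse)
  then show "convergent X" by (auto simp: convergent_def)
qed

definition endo_apply :: "'v::euclidean_space endo \<Rightarrow> 'v \<Rightarrow> 'v" (infixr \<open>\<triangleright>\<close> 75) where
  "K \<triangleright> v = blinfun_apply (endo_blinfun K) v"

lemma endo_apply_mult [simp]: "(K * L) \<triangleright> v = K \<triangleright> L \<triangleright> v"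
  by (simp add: endo_apply_def times_endo.rep_eq)

lemma endo_apply_one [simp]: "1 \<triangleright> v = v"
  by (simp add: endo_apply_def one_endo.rep_eq)

lemma endo_apply_add [simp]: "(K + L) \<triangleright> v = K \<triangleright> v + L \<triangleright> v"
  by (simp add: endo_apply_def plus_endo.rep_eq blinfun.add_left)

lemma endo_apply_uminus [simp]: "(- K) \<triangleright> v = - (K \<triangleright> v)"
  by (simp add: endo_apply_def uminus_endo.rep_eq blinfun.minus_left)

lemma endo_apply_scaleR [simp]: "(r *\<^sub>R K) \<triangleright> v = r *\<^sub>R (K \<triangleright> v)"
  by (simp add: endo_apply_def scaleR_endo.rep_eq blinfun.scaleR_left)

lemma norm_endo_apply: "norm (K \<triangleright> v) \<le> norm K * norm v"
  by (simp add: endo_apply_def norm_endo.rep_eq norm_blinfun)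

lemma bounded_linear_endo_apply_left: "bounded_linear (\<lambda>K. K \<triangleright> v)"
proof (rule bounded_linear_intro[of _ "norm v"])
  show "norm (K \<triangleright> v) \<le> norm K * norm v" for K by (rule norm_endo_apply)
qed simp_all

lemma endo_eqI: "(\<And>v. K \<triangleright> v = L \<triangleright> v) \<Longrightarrow> K = L"
  unfolding endo_apply_def by (metis blinfun_eqI endo_blinfun_inject)

definition endo_of :: "('v \<Rightarrow> 'v) \<Rightarrow> 'v::euclidean_space endo" where
  "endo_of f = Endo (Blinfun f)"

lemma endo_of_apply [simp]: "linear f \<Longrightarrow> endo_of f \<triangleright> v = f v"
  by (simp add: endo_apply_def endo_of_def Endo_inverse bounded_linear_Blinfun_apply
      linear_conv_bounded_linear)

section \<open>Gaussian integrals of exponentials in a Banach algebra\<close>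

definition gaussian_moment :: "nat \<Rightarrow> real" where
  "gaussian_moment n = (if even n then fact n / (2 ^ (n div 2) * fact (n div 2)) else 0)"

lemma gaussian_moment_odd [simp]: "odd n \<Longrightarrow> gaussian_moment n = 0"
  by (simp add: gaussian_moment_def)

lemma gaussian_moment_even_div_fact: "gaussian_moment (2 * i) / fact (2 * i) = 1 / (2 ^ i * fact i)"
  by (simp add: gaussian_moment_def)

lemma gaussian_moment_Suc_Suc: "gaussian_moment (Suc (Suc n)) = (real n + 1) * gaussian_moment n"
proof (cases "even n")
  case True
  then obtain k where n: "n = 2 * k" by (auto elim: evenE)
  have "gaussian_moment (Suc (Suc n)) = fact (2 * Suc k) / (2 ^ Suc k * fact (Suc k))"
    by (simp add: gaussian_moment_def n)
  also have "\<dots> = (2 * (real k + 1)) * ((2 * real k + 1) * fact (2 * k)) / ((2 * (real k + 1)) * (2 ^ k * fact k))"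
    by (simp add: algebra_simps)
  also have "\<dots> = (real n + 1) * gaussian_moment n"
    by (subst mult_divide_mult_cancel_left) (simp_all add: gaussian_moment_def n)
  finally show ?thesis .
qed simp

lemma gaussian_moment_even_coeff:
  "gaussian_moment (2 * i) * s ^ (2 * i) / fact (2 * i) = (s\<^sup>2 / 2) ^ i / fact i"
proof -
  have "gaussian_moment (2 * i) * s ^ (2 * i) / fact (2 * i)
      = s ^ (2 * i) * (gaussian_moment (2 * i) / fact (2 * i))" by simp
  also have "\<dots> = (s\<^sup>2 / 2) ^ i / fact i"
    by (simp add: gaussian_moment_even_div_fact power_mult power_divide)
  finally show ?thesis .
qed

lemma gaussian_moment_odd_coeff:
  "gaussian_moment (2 * i + 1 + 1) * s ^ (2 * i + 1) / fact (2 * i + 1) = s * ((s\<^sup>2 / 2) ^ i / fact i)"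
proof -
  have fact_odd: "(fact (2 * i + 1) :: real) = (2 * real i + 1) * fact (2 * i)"
    by (simp add: algebra_simps)
  have moment: "gaussian_moment (2 * i + 1 + 1) = (2 * real i + 1) * gaussian_moment (2 * i)"
    using gaussian_moment_Suc_Suc[of "2 * i"] by simp
  have "gaussian_moment (2 * i + 1 + 1) * s ^ (2 * i + 1) / fact (2 * i + 1)
      = ((2 * real i + 1) * (s * (gaussian_moment (2 * i) * s ^ (2 * i))))
        / ((2 * real i + 1) * fact (2 * i))"
    unfolding fact_odd moment by (simp add: mult_ac)
  also have "\<dots> = s * (gaussian_moment (2 * i) * s ^ (2 * i) / fact (2 * i))"
    by (subst mult_divide_mult_cancel_left) simp_all
  finally show ?thesis by (simp only: gaussian_moment_even_coeff)
qed

lemma has_integral_gaussian_moment: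
  "((\<lambda>w::real. w ^ n * exp (- w\<^sup>2 / 2)) has_integral sqrt (2 * pi) * gaussian_moment n) UNIV"
proof -
  have "has_bochner_integral lborel (\<lambda>x. std_normal_density x * x ^ n) (gaussian_moment n)"
  proof (cases "even n")
    case True
    then obtain k where "n = 2 * k" by (auto elim: evenE)
    then show ?thesis using std_normal_moment_even[of k] by (simp add: gaussian_moment_def)
  next
    case False
    then obtain k where "n = 2 * k + 1" by (auto elim: oddE)
    then show ?thesis using std_normal_moment_odd[of k] by simp
  qed
  then have "((\<lambda>x. std_normal_density x * x ^ n) has_integral gaussian_moment n) UNIV"
    using has_integral_integral_lborel has_bochner_integral_integral_eq integrable.intros
    by (metis lebesgue_on_UNIV_eq)
  from has_integral_mult_right[OF this, of "sqrt (2 * pi)"] show ?thesis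
    by (simp add: std_normal_density_def mult_ac)
qed

lemma integrable_gaussian_times_exp:
  "(\<lambda>w::real. exp (- w\<^sup>2 / 2) * exp (a * w)) integrable_on UNIV"
proof -
  have "(\<lambda>w. (sqrt (2 * pi) * exp (a\<^sup>2 / 2)) * normal_density a 1 w) integrable_on UNIV"
    by (intro integrable_on_mult_right integrable_on_lborel) simp
  moreover have "(sqrt (2 * pi) * exp (a\<^sup>2 / 2)) * normal_density a 1 w
      = exp (- w\<^sup>2 / 2) * exp (a * w)" for w
  proof -
    have "a\<^sup>2 / 2 + (- (w - a)\<^sup>2 / 2) = - w\<^sup>2 / 2 + a * w"
      by (simp add: power2_eq_square field_simps)
    then show ?thesis by (simp add: normal_density_def exp_add[symmetric])
  qed
  ultimately show ?thesis by simp
qed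

lemma exp_partial_sum_le:
  fixes x :: real
  assumes "0 \<le> x"
  shows "(\<Sum>k<n. x ^ k / fact k) \<le> exp x"
proof -
  have "(\<lambda>k. x ^ k / fact k) sums exp x"
    using exp_converges[of x] by (simp add: divide_inverse_commute)
  then show ?thesis
    using sum_le_suminf[of "\<lambda>k. x ^ k / fact k" "{..<n}"] assms by (auto simp: sums_iff)
qed

lemma power_div_fact_le_exp:
  fixes x :: real
  assumes "0 \<le> x"
  shows "x ^ n / fact n \<le> exp x"
proof -
  have "x ^ n / fact n \<le> (\<Sum>k<Suc n. x ^ k / fact k)"
    using assms by (intro member_le_sum) auto
  also have "\<dots> \<le> exp x" by (rule exp_partial_sum_le[OF assms])
  finally show ?thesis .
qed

lemma bounded_linear_exp_sums:
  fixes K :: "'a::{real_normed_algebra_1,banach}" and f :: "'a \<Rightarrow> 'b::real_normed_vector"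
  assumes "bounded_linear f"
  shows "(\<lambda>k. (r ^ k / fact k) *\<^sub>R f (K ^ k)) sums f (exp (r *\<^sub>R K))"
proof -
  interpret f: bounded_linear f by fact
  from f.sums[OF exp_converges[of "r *\<^sub>R K"]] show ?thesis
    by (simp add: f.scaleR divide_inverse_commute)
qed

lemma norm_exp_partial_sum_le:
  fixes K :: "'a::real_normed_algebra_1"
  assumes f: "\<And>x. norm (f x) \<le> norm x * B" and "0 \<le> B"
  shows "norm (\<Sum>k<m. (r ^ k / fact k) *\<^sub>R f (K ^ k)) \<le> exp (\<bar>r\<bar> * norm K) * B"
proof -
  have "norm (\<Sum>k<m. (r ^ k / fact k) *\<^sub>R f (K ^ k)) \<le> (\<Sum>k<m. (\<bar>r\<bar> * norm K) ^ k / fact k * B)"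
  proof (rule order_trans[OF norm_sum sum_mono])
    fix k
    have "norm (f (K ^ k)) \<le> norm K ^ k * B"
      using assms by (intro order_trans[OF f] mult_right_mono norm_power_ineq) auto
    then have "\<bar>r\<bar> ^ k / fact k * norm (f (K ^ k)) \<le> \<bar>r\<bar> ^ k / fact k * (norm K ^ k * B)"
      by (intro mult_left_mono) auto
    then show "norm ((r ^ k / fact k) *\<^sub>R f (K ^ k)) \<le> (\<bar>r\<bar> * norm K) ^ k / fact k * B"
      by (simp add: power_abs power_mult_distrib mult_ac)
  qed
  also have "\<dots> \<le> exp (\<bar>r\<bar> * norm K) * B"
    unfolding sum_distrib_right[symmetric] using assms by (intro mult_right_mono exp_partial_sum_le) auto
  finally show ?thesis .
qed

text \<open>The power series of the exponential is integrated term by term against the Gaussian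
  moments; dominated convergence applies because the partial sums are bounded by
  \<open>exp (\<bar>w\<bar> * \<bar>s\<bar> * norm K)\<close>, which the Gaussian weight makes integrable.\<close>

lemma has_integral_gaussian_moment_exp:
  fixes K :: "'a::{real_normed_algebra_1,banach}" and f :: "'a \<Rightarrow> 'b::euclidean_space"
  assumes f: "bounded_linear f"
    and L: "(\<lambda>k. (gaussian_moment (k + j) * s ^ k / fact k) *\<^sub>R f (K ^ k)) sums L"
  shows "((\<lambda>w. (w ^ j * exp (- w\<^sup>2 / 2)) *\<^sub>R f (exp ((w * s) *\<^sub>R K)))
           has_integral sqrt (2 * pi) *\<^sub>R L) UNIV"
proof -
  obtain B where B: "B > 0" "\<And>x. norm (f x) \<le> norm x * B"
    using bounded_linear.pos_bounded[OF f] by blast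
  define a where "a = \<bar>s\<bar> * norm K + 1" \<comment> \<open>the \<open>+ 1\<close> absorbs \<open>w ^ j \<le> fact j * exp \<bar>w\<bar>\<close>\<close>
  define g where "g m w = (w ^ j * exp (- w\<^sup>2 / 2)) *\<^sub>R
    (\<Sum>k<m. ((w * s) ^ k / fact k) *\<^sub>R f (K ^ k))" for m w
  define h where "h w = fact j * B * (exp (- w\<^sup>2 / 2) * exp (a * w) + exp (- w\<^sup>2 / 2) * exp (- a * w))"
    for w
  show ?thesis
  proof (rule has_integral_dominated_convergence[where f = g and h = h])
    fix m
    have "((\<lambda>w. \<Sum>k<m. (w ^ (k + j) * exp (- w\<^sup>2 / 2)) *\<^sub>R ((s ^ k / fact k) *\<^sub>R f (K ^ k)))
        has_integral (\<Sum>k<m. (sqrt (2 * pi) * gaussian_moment (k + j)) *\<^sub>R ((s ^ k / fact k) *\<^sub>R f (K ^ k))))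
        UNIV"
      by (intro has_integral_sum finite_lessThan has_integral_scaleR_left has_integral_gaussian_moment)
    then show "(g m has_integral
        sqrt (2 * pi) *\<^sub>R (\<Sum>k<m. (gaussian_moment (k + j) * s ^ k / fact k) *\<^sub>R f (K ^ k))) UNIV"
      unfolding g_def
      by (simp add: scaleR_sum_right power_mult_distrib power_add mult_ac)
  next
    show "h integrable_on UNIV"
      unfolding h_def by (intro integrable_on_mult_right integrable_add integrable_gaussian_times_exp)
  next
    fix m
    show "\<forall>w\<in>UNIV. norm (g m w) \<le> h w"
    proof
      fix w :: real
      define x where "x = \<bar>w\<bar> * \<bar>s\<bar> * norm K"
      have sum_le: "norm (\<Sum>k<m. ((w * s) ^ k / fact k) *\<^sub>R f (K ^ k)) \<le> exp x * B"
        using norm_exp_partial_sum_le[OF B(2) less_imp_le[OF B(1)], where r = "w * s"]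
        by (simp add: x_def abs_mult)
      have pow_le: "\<bar>w\<bar> ^ j \<le> fact j * exp \<bar>w\<bar>"
        using power_div_fact_le_exp[of "\<bar>w\<bar>" j] by (simp add: field_simps)
      have "norm (g m w) = \<bar>w\<bar> ^ j * exp (- w\<^sup>2 / 2) * norm (\<Sum>k<m. ((w * s) ^ k / fact k) *\<^sub>R f (K ^ k))"
        unfolding g_def by (simp add: abs_mult power_abs)
      also have "\<dots> \<le> (fact j * exp \<bar>w\<bar>) * exp (- w\<^sup>2 / 2) * (exp x * B)"
        by (intro mult_mono mult_right_mono pow_le sum_le) auto
      also have "\<dots> = fact j * B * (exp (- w\<^sup>2 / 2) * exp (a * \<bar>w\<bar>))"
        by (simp add: a_def x_def exp_add[symmetric] algebra_simps)
      also have "\<dots> \<le> h w"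
        unfolding h_def using B(1)
        by (intro mult_left_mono) (auto simp: abs_if distrib_left[symmetric])
      finally show "norm (g m w) \<le> h w" .
    qed
  next
    show "\<forall>w\<in>UNIV. (\<lambda>m. g m w) \<longlonglongrightarrow> (w ^ j * exp (- w\<^sup>2 / 2)) *\<^sub>R f (exp ((w * s) *\<^sub>R K))"
      unfolding g_def
      by (intro ballI tendsto_scaleR tendsto_const bounded_linear_exp_sums[OF f, unfolded sums_def])
  next
    show "(\<lambda>m. sqrt (2 * pi) *\<^sub>R (\<Sum>k<m. (gaussian_moment (k + j) * s ^ k / fact k) *\<^sub>R f (K ^ k)))
        \<longlonglongrightarrow> sqrt (2 * pi) *\<^sub>R L"
      using L unfolding sums_def by (intro tendsto_scaleR tendsto_const)
  qed
qed

lemma has_integral_gaussian_exp: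
  fixes K :: "'a::{real_normed_algebra_1,banach}" and f :: "'a \<Rightarrow> 'b::euclidean_space"
  assumes f: "bounded_linear f"
  shows "((\<lambda>w. exp (- w\<^sup>2 / 2) *\<^sub>R f (exp ((w * s) *\<^sub>R K)))
           has_integral sqrt (2 * pi) *\<^sub>R f (exp ((s\<^sup>2 / 2) *\<^sub>R (K * K)))) UNIV"
proof -
  have "(\<lambda>k. (gaussian_moment (k + 0) * s ^ k / fact k) *\<^sub>R f (K ^ k))
      sums f (exp ((s\<^sup>2 / 2) *\<^sub>R (K * K)))"
  proof (subst sums_mono_reindex[of "\<lambda>i. 2 * i", symmetric])
    show "strict_mono (\<lambda>i::nat. 2 * i)" by (simp add: strict_mono_def)
    show "(gaussian_moment (k + 0) * s ^ k / fact k) *\<^sub>R f (K ^ k) = 0"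
      if "k \<notin> range (\<lambda>i. 2 * i)" for k
    proof -
      have "odd k" using that by (metis evenE rangeI)
      then show ?thesis by simp
    qed
    show "(\<lambda>i. (gaussian_moment (2 * i + 0) * s ^ (2 * i) / fact (2 * i)) *\<^sub>R f (K ^ (2 * i)))
        sums f (exp ((s\<^sup>2 / 2) *\<^sub>R (K * K)))"
      using bounded_linear_exp_sums[OF f, of "s\<^sup>2 / 2" "K * K"]
      by (simp only: add_0_right gaussian_moment_even_coeff) (simp only: power_mult power2_eq_square)
  qed
  from has_integral_gaussian_moment_exp[OF f this] show ?thesis by simp
qed

lemma has_integral_gaussian_first_moment_exp:
  fixes K :: "'a::{real_normed_algebra_1,banach}" and f :: "'a \<Rightarrow> 'b::euclidean_space"
  assumes f: "bounded_linear f"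
  shows "((\<lambda>w. (w * exp (- w\<^sup>2 / 2)) *\<^sub>R f (exp ((w * s) *\<^sub>R K)))
           has_integral sqrt (2 * pi) *\<^sub>R s *\<^sub>R f (K * exp ((s\<^sup>2 / 2) *\<^sub>R (K * K)))) UNIV"
proof -
  have Kpow: "K ^ (2 * i + 1) = K * (K * K) ^ i" for i
    by (simp add: power_mult power2_eq_square)
  have "bounded_linear (\<lambda>x. s *\<^sub>R f (K * x))"
    by (intro bounded_linear_compose[OF bounded_linear_scaleR_right]
        bounded_linear_compose[OF f] bounded_linear_mult_right)
  from bounded_linear_exp_sums[OF this, of "s\<^sup>2 / 2" "K * K"]
  have "(\<lambda>k. (gaussian_moment (k + 1) * s ^ k / fact k) *\<^sub>R f (K ^ k))
      sums (s *\<^sub>R f (K * exp ((s\<^sup>2 / 2) *\<^sub>R (K * K))))"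
  proof (subst sums_mono_reindex[of "\<lambda>i. 2 * i + 1", symmetric])
    show "strict_mono (\<lambda>i::nat. 2 * i + 1)" by (simp add: strict_mono_def)
    show "(gaussian_moment (k + 1) * s ^ k / fact k) *\<^sub>R f (K ^ k) = 0"
      if "k \<notin> range (\<lambda>i. 2 * i + 1)" for k
    proof -
      have "odd (k + 1)" using that by (metis oddE even_plus_one_iff rangeI)
      then show ?thesis by simp
    qed
  qed (simp only: gaussian_moment_odd_coeff Kpow, use f in \<open>simp add: linear_simps mult_ac\<close>)
  from has_integral_gaussian_moment_exp[OF f this] show ?thesis by simp
qed

lemma has_integral_gaussian_pair_inner:
  fixes j K1 K2 :: "'a::{real_normed_algebra_1,banach}" and f :: "'a \<Rightarrow> 'b::euclidean_space"
  assumes f: "bounded_linear f"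
  shows "((\<lambda>w'. (exp (- w\<^sup>2 / 2) * exp (- w'\<^sup>2 / 2)) *\<^sub>R
             f ((w' *\<^sub>R 1 + w *\<^sub>R j) * exp ((w * s) *\<^sub>R K1) * exp ((w' * s) *\<^sub>R K2)))
         has_integral (sqrt (2 * pi) * exp (- w\<^sup>2 / 2)) *\<^sub>R
           f (s *\<^sub>R (exp ((w * s) *\<^sub>R K1) * K2 * exp ((s\<^sup>2 / 2) *\<^sub>R (K2 * K2)))
              + w *\<^sub>R (j * exp ((w * s) *\<^sub>R K1) * exp ((s\<^sup>2 / 2) *\<^sub>R (K2 * K2))))) UNIV"
proof -
  interpret f: bounded_linear f by fact
  define U where "U = exp ((w * s) *\<^sub>R K1)"
  have "bounded_linear (\<lambda>x. f (U * x))"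
    by (intro bounded_linear_compose[OF f] bounded_linear_mult_right)
  note first = has_integral_gaussian_first_moment_exp[OF this, of s K2]
  have "bounded_linear (\<lambda>x. w *\<^sub>R f (j * U * x))"
    by (intro bounded_linear_compose[OF bounded_linear_scaleR_right]
        bounded_linear_compose[OF f] bounded_linear_mult_right)
  note zeroth = has_integral_gaussian_exp[OF this, of s K2]
  from has_integral_cmul[OF has_integral_add[OF first zeroth], of "exp (- w\<^sup>2 / 2)"]
  show ?thesis
    by (simp add: U_def f.scaleR f.add algebra_simps)
qed

lemma has_integral_gaussian_pair:
  fixes j K1 K2 :: "'a::{real_normed_algebra_1,banach}" and f :: "'a \<Rightarrow> 'b::euclidean_space"
    and s :: real
  assumes f: "bounded_linear f"
  defines "E1 \<equiv> exp ((s\<^sup>2 / 2) *\<^sub>R (K1 * K1))" and "E2 \<equiv> exp ((s\<^sup>2 / 2) *\<^sub>R (K2 * K2))"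
  shows "((\<lambda>w. integral UNIV (\<lambda>w'. (exp (- w\<^sup>2 / 2) * exp (- w'\<^sup>2 / 2)) *\<^sub>R
             f ((w' *\<^sub>R 1 + w *\<^sub>R j) * exp ((w * s) *\<^sub>R K1) * exp ((w' * s) *\<^sub>R K2))))
         has_integral (2 * pi) *\<^sub>R s *\<^sub>R f (E1 * K2 * E2 + j * K1 * E1 * E2)) UNIV"
proof -
  interpret f: bounded_linear f by fact
  have "bounded_linear (\<lambda>x. sqrt (2 * pi) *\<^sub>R s *\<^sub>R f (x * K2 * E2))"
    by (intro bounded_linear_compose[OF bounded_linear_scaleR_right] bounded_linear_compose[OF f]
        bounded_linear_compose[OF bounded_linear_mult_left bounded_linear_mult_left])
  note zeroth = has_integral_gaussian_exp[OF this, of s K1]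
  have "bounded_linear (\<lambda>x. sqrt (2 * pi) *\<^sub>R f (j * x * E2))"
    by (intro bounded_linear_compose[OF bounded_linear_scaleR_right] bounded_linear_compose[OF f]
        bounded_linear_compose[OF bounded_linear_mult_left bounded_linear_mult_right])
  note first = has_integral_gaussian_first_moment_exp[OF this, of s K1]
  have "((\<lambda>w. exp (- w\<^sup>2 / 2) *\<^sub>R (sqrt (2 * pi) *\<^sub>R s *\<^sub>R f (exp ((w * s) *\<^sub>R K1) * K2 * E2))
        + (w * exp (- w\<^sup>2 / 2)) *\<^sub>R (sqrt (2 * pi) *\<^sub>R f (j * exp ((w * s) *\<^sub>R K1) * E2)))
       has_integral (2 * pi) *\<^sub>R s *\<^sub>R f (E1 * K2 * E2 + j * K1 * E1 * E2)) UNIV"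
  proof -
    have "sqrt (2 * pi) * (sqrt (2 * pi) * x) = 2 * pi * x" for x
      by (simp add: mult.assoc[symmetric])
    with has_integral_add[OF zeroth first] show ?thesis
      by (simp add: E1_def f.add scaleR_add_right mult_ac)
  qed
  moreover have "integral UNIV (\<lambda>w'. (exp (- w\<^sup>2 / 2) * exp (- w'\<^sup>2 / 2)) *\<^sub>R
             f ((w' *\<^sub>R 1 + w *\<^sub>R j) * exp ((w * s) *\<^sub>R K1) * exp ((w' * s) *\<^sub>R K2)))
      = exp (- w\<^sup>2 / 2) *\<^sub>R (sqrt (2 * pi) *\<^sub>R s *\<^sub>R f (exp ((w * s) *\<^sub>R K1) * K2 * E2))
        + (w * exp (- w\<^sup>2 / 2)) *\<^sub>R (sqrt (2 * pi) *\<^sub>R f (j * exp ((w * s) *\<^sub>R K1) * E2))" for w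
    unfolding integral_unique[OF has_integral_gaussian_pair_inner[OF f]] E2_def
    by (simp add: f.add f.scaleR scaleR_add_right mult_ac)
  ultimately show ?thesis by simp
qed

lemma has_integral_atLeast_FTC_nonneg:
  fixes g \<Phi> :: "real \<Rightarrow> real"
  assumes deriv: "\<And>t. a \<le> t \<Longrightarrow> (\<Phi> has_real_derivative g t) (at t)"
    and nonneg: "\<And>t. a \<le> t \<Longrightarrow> 0 \<le> g t"
    and lim: "(\<Phi> \<longlongrightarrow> L) at_top"
  shows "(g has_integral (L - \<Phi> a)) {a..}"
proof (rule has_integral_to_inf)
  have ftc: "(g has_integral (\<Phi> y - \<Phi> a)) {a..y}" if "a \<le> y" for y
    using that deriv
    by (intro fundamental_theorem_of_calculus)
      (auto simp: has_real_derivative_iff_has_vector_derivative[symmetric]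
        intro: has_field_derivative_at_within)
  show "g integrable_on {a..y}" for y
    by (cases "a \<le> y") (use ftc in auto)
  have "((\<lambda>y. \<Phi> y - \<Phi> a) \<longlongrightarrow> L - \<Phi> a) at_top"
    by (intro tendsto_diff lim tendsto_const)
  moreover have "\<forall>\<^sub>F y in at_top. \<Phi> y - \<Phi> a = integral {a..y} g"
    using eventually_ge_at_top[of a] by (rule eventually_mono) (metis ftc integral_unique)
  ultimately show "((\<lambda>y. integral {a..y} g) \<longlongrightarrow> L - \<Phi> a) at_top"
    by (rule Lim_transform_eventually)
qed (use nonneg in auto)

lemma has_integral_atLeast_FTC_dominated:
  fixes g \<Phi> :: "real \<Rightarrow> 'a::euclidean_space" and h :: "real \<Rightarrow> real"
  assumes deriv: "\<And>t. a \<le> t \<Longrightarrow> (\<Phi> has_vector_derivative g t) (at t)"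
    and h: "h integrable_on {a..}" and dominated: "\<And>t. a \<le> t \<Longrightarrow> norm (g t) \<le> h t"
    and lim: "(\<Phi> \<longlongrightarrow> L) at_top"
  shows "(g has_integral (L - \<Phi> a)) {a..}"
proof -
  define f where "f k t = (if t \<in> {a..a + real k} then g t else 0)" for k t
  have "(g has_integral (\<Phi> (a + real k) - \<Phi> a)) {a..a + real k}" for k
    using deriv by (intro fundamental_theorem_of_calculus) (auto intro: has_vector_derivative_at_within)
  then have f: "(f k has_integral (\<Phi> (a + real k) - \<Phi> a)) {a..}" for k
    unfolding f_def has_integral_restrict_Int by (simp add: Int_absorb2 Int_commute)
  show ?thesis
  proof (rule has_integral_dominated_convergence[OF f h])
    show "\<forall>t\<in>{a..}. norm (f k t) \<le> h t" for k
      using dominated by (auto simp: f_def intro: order_trans[OF norm_ge_zero])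
    show "\<forall>t\<in>{a..}. (\<lambda>k. f k t) \<longlonglongrightarrow> g t"
    proof
      fix t :: real
      obtain N :: nat where "t - a \<le> real N" using real_arch_simple by blast
      then have "\<forall>\<^sub>F k in sequentially. f k t = g t" if "t \<in> {a..}"
        using that by (auto simp: f_def eventually_sequentially intro!: exI[of _ N])
      then show "t \<in> {a..} \<Longrightarrow> (\<lambda>k. f k t) \<longlonglongrightarrow> g t" by (rule tendsto_eventually)
    qed
    show "(\<lambda>k. \<Phi> (a + real k) - \<Phi> a) \<longlonglongrightarrow> L - \<Phi> a"
      by (intro tendsto_diff tendsto_const filterlim_compose[OF lim]
          filterlim_tendsto_add_at_top[OF tendsto_const filterlim_real_sequentially])
  qed
qed

lemma exp_neg_quadratic_tendsto_zero:
  assumes "0 < c"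
  shows "((\<lambda>t::real. exp (- (c * t\<^sup>2))) \<longlongrightarrow> 0) at_top"
proof -
  have "LIM t at_top. c * t\<^sup>2 :> at_top"
    using assms
    by (intro filterlim_tendsto_pos_mult_at_top[OF tendsto_const _ filterlim_pow_at_top[OF _ filterlim_ident]])
      simp_all
  then show ?thesis
    by (intro filterlim_compose[OF exp_at_bot]) (simp add: filterlim_uminus_at_top)
qed

section \<open>The heat semigroup of a coercive operator\<close>

lemma mult_exp_commute:
  fixes A B :: "'a::{real_normed_algebra_1,banach}"
  assumes "A * B = B * A"
  shows "A * exp B = exp B * A"
proof -
  have power_commute: "A * B ^ n = B ^ n * A" for n
    by (induction n) (simp_all add: assms mult.assoc flip: mult.assoc[of A B])
  have "A * exp B = (\<Sum>n. A * (B ^ n /\<^sub>R fact n))"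
    unfolding exp_def by (rule suminf_mult[symmetric, OF summable_exp_generic])
  also have "\<dots> = (\<Sum>n. (B ^ n /\<^sub>R fact n) * A)"
    by (simp add: power_commute)
  also have "\<dots> = exp B * A"
    unfolding exp_def by (rule suminf_mult2[symmetric, OF summable_exp_generic])
  finally show ?thesis .
qed

lemma has_vector_derivative_exp_endo_apply:
  "((\<lambda>s. exp (s *\<^sub>R Q) \<triangleright> v) has_vector_derivative Q \<triangleright> exp (s *\<^sub>R Q) \<triangleright> v) (at s)"
  using bounded_linear.has_vector_derivative[OF bounded_linear_endo_apply_left
      exp_scaleR_has_vector_derivative_left]
  by simp

text \<open>Coercivity of \<open>Q\<close> makes \<open>exp (2 * c * s) * norm (exp (- s Q) v)\<^sup>2\<close> nonincreasing in \<open>s\<close>.\<close>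

lemma norm_exp_neg_coercive_le:
  fixes Q :: "'v::euclidean_space endo"
  assumes coercive: "\<And>v. c * (norm v)\<^sup>2 \<le> (Q \<triangleright> v) \<bullet> v" and "0 \<le> s"
  shows "norm (exp (s *\<^sub>R (- Q)) \<triangleright> v) \<le> exp (- c * s) * norm v"
proof -
  define z where "z s = exp (s *\<^sub>R (- Q)) \<triangleright> v" for s
  have dz: "(z has_vector_derivative - (Q \<triangleright> z s)) (at s)" for s
    using has_vector_derivative_exp_endo_apply[of "- Q" v s] unfolding z_def[abs_def] by simp
  define \<psi> where "\<psi> s = exp (2 * c * s) * (z s \<bullet> z s)" for s
  have d\<psi>: "(\<psi> has_real_derivative
      exp (2 * c * s) * (2 * c * (z s \<bullet> z s) - 2 * ((Q \<triangleright> z s) \<bullet> z s))) (at s)" for s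
  proof -
    have "((\<lambda>s. z s \<bullet> z s) has_real_derivative - 2 * ((Q \<triangleright> z s) \<bullet> z s)) (at s)"
      using has_derivative_inner[OF dz[unfolded has_vector_derivative_def] dz[unfolded has_vector_derivative_def]]
      unfolding has_field_derivative_def
      by (rule has_derivative_eq_rhs) (auto simp: fun_eq_iff inner_commute algebra_simps)
    then show ?thesis
      unfolding \<psi>_def by (auto intro!: derivative_eq_intros simp: algebra_simps)
  qed
  have "\<psi> s \<le> \<psi> 0"
  proof (rule DERIV_nonpos_imp_nonincreasing[OF \<open>0 \<le> s\<close>])
    fix x
    have "c * (z x \<bullet> z x) \<le> (Q \<triangleright> z x) \<bullet> z x"
      using coercive[of "z x"] by (simp add: power2_norm_eq_inner)
    then show "\<exists>y. (\<psi> has_real_derivative y) (at x) \<and> y \<le> 0"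
      using d\<psi> by (auto intro!: exI mult_nonneg_nonpos)
  qed
  then have "(norm (z s))\<^sup>2 \<le> exp (- 2 * c * s) * (norm v)\<^sup>2"
    by (simp add: \<psi>_def z_def power2_norm_eq_inner exp_minus field_simps)
  also have "\<dots> = (exp (- c * s) * norm v)\<^sup>2"
    by (simp add: power_mult_distrib power2_eq_square exp_add[symmetric])
  finally show ?thesis
    unfolding z_def by (rule power2_le_imp_le) simp
qed

text \<open>The integrand is the derivative of \<open>t \<mapsto> - exp (- t\<^sup>2 Q / 2) X\<close>, which decays like
  a Gaussian in \<open>t\<close> by coercivity.\<close>

lemma has_integral_heat_semigroup_coercive:
  fixes Q :: "'v::euclidean_space endo"
  assumes coercive: "\<And>v. c * (norm v)\<^sup>2 \<le> (Q \<triangleright> v) \<bullet> v" and "0 < c"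
  shows "((\<lambda>t. t *\<^sub>R exp ((t\<^sup>2 / 2) *\<^sub>R (- Q)) \<triangleright> Q \<triangleright> X) has_integral X) {0..}"
proof -
  define E where "E t = exp ((t\<^sup>2 / 2) *\<^sub>R (- Q))" for t
  have decay: "norm (E t \<triangleright> v) \<le> exp (- (c / 2 * t\<^sup>2)) * norm v" for t v
    using norm_exp_neg_coercive_le[OF coercive, of "t\<^sup>2 / 2" v] by (simp add: E_def)
  have "Q * E t = E t * Q" for t
    unfolding E_def by (rule mult_exp_commute) simp
  then have QE: "Q \<triangleright> E t \<triangleright> v = E t \<triangleright> Q \<triangleright> v" for t v
    by (metis endo_apply_mult)
  define \<Phi> where "\<Phi> t = - (E t \<triangleright> X)" for t
  have d\<Phi>: "(\<Phi> has_vector_derivative t *\<^sub>R E t \<triangleright> Q \<triangleright> X) (at t)" for t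
  proof -
    have "((\<lambda>t::real. t\<^sup>2 / 2) has_vector_derivative t) (at t)"
      unfolding has_real_derivative_iff_has_vector_derivative[symmetric]
      by (auto intro!: derivative_eq_intros)
    from vector_diff_chain_at[OF this has_vector_derivative_exp_endo_apply[of "- Q" X]]
    have "((\<lambda>t. E t \<triangleright> X) has_vector_derivative t *\<^sub>R (- Q) \<triangleright> E t \<triangleright> X) (at t)"
      by (simp only: E_def o_def)
    then show ?thesis
      unfolding \<Phi>_def using QE by (auto dest: has_vector_derivative_minus)
  qed
  define k where "k = norm (Q \<triangleright> X)"
  have "((\<lambda>t. t * exp (- (c / 2 * t\<^sup>2)) * k) has_integral (0 - (- (k / c) * exp (- (c / 2 * 0\<^sup>2))))) {0..}"
  proof (rule has_integral_atLeast_FTC_nonneg)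
    show "((\<lambda>t. - (k / c) * exp (- (c / 2 * t\<^sup>2))) has_real_derivative t * exp (- (c / 2 * t\<^sup>2)) * k) (at t)"
      for t
      using \<open>0 < c\<close> by (auto intro!: derivative_eq_intros simp: field_simps power2_eq_square)
    show "0 \<le> t \<Longrightarrow> 0 \<le> t * exp (- (c / 2 * t\<^sup>2)) * k" for t by (simp add: k_def)
    show "((\<lambda>t. - (k / c) * exp (- (c / 2 * t\<^sup>2))) \<longlongrightarrow> 0) at_top"
      using tendsto_mult_right_zero[OF exp_neg_quadratic_tendsto_zero, of "c / 2" "- (k / c)"] \<open>0 < c\<close>
      by simp
  qed
  then have dominant: "(\<lambda>t. t * exp (- (c / 2 * t\<^sup>2)) * k) integrable_on {0..}" by blast
  have "((\<lambda>t. t *\<^sub>R E t \<triangleright> Q \<triangleright> X) has_integral (0 - \<Phi> 0)) {0..}"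
  proof (rule has_integral_atLeast_FTC_dominated[OF d\<Phi> dominant])
    show "norm (t *\<^sub>R E t \<triangleright> Q \<triangleright> X) \<le> t * exp (- (c / 2 * t\<^sup>2)) * k" if "0 \<le> t" for t
      using mult_left_mono[OF decay[of t "Q \<triangleright> X"] that] that by (simp add: k_def mult.assoc)
    have "\<forall>\<^sub>F t in at_top. norm (\<Phi> t) \<le> exp (- (c / 2 * t\<^sup>2)) * norm X"
      unfolding \<Phi>_def norm_minus_cancel by (intro always_eventually allI decay)
    moreover have "((\<lambda>t. exp (- (c / 2 * t\<^sup>2)) * norm X) \<longlongrightarrow> 0) at_top"
      using tendsto_mult_left_zero[OF exp_neg_quadratic_tendsto_zero, of "c / 2"] \<open>0 < c\<close> by simp
    ultimately show "(\<Phi> \<longlongrightarrow> 0) at_top"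
      by (rule Lim_null_comparison)
  qed
  then show ?thesis by (simp add: E_def \<Phi>_def)
qed

lemma coercive_adjoint_mult_self:
  fixes T T' S :: "'v::euclidean_space endo"
  assumes adjoint: "\<And>u v. (T' \<triangleright> u) \<bullet> v = u \<bullet> (T \<triangleright> v)" and left_inverse: "S * T = 1"
  obtains c where "0 < c" "\<And>v. c * (norm v)\<^sup>2 \<le> ((T' * T) \<triangleright> v) \<bullet> v"
proof
  have pos: "0 < norm S + 1"
    by (simp add: add_nonneg_pos)
  then show "0 < 1 / (norm S + 1)\<^sup>2"
    by simp
  fix v
  have "norm v = norm (S \<triangleright> T \<triangleright> v)"
    by (metis endo_apply_mult endo_apply_one left_inverse)
  also have "\<dots> \<le> (norm S + 1) * norm (T \<triangleright> v)"
    by (rule order_trans[OF norm_endo_apply]) (simp add: mult_right_mono)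
  finally have "(norm v)\<^sup>2 \<le> (norm S + 1)\<^sup>2 * (norm (T \<triangleright> v))\<^sup>2"
    unfolding power_mult_distrib[symmetric] by (rule power_mono) simp
  then have "1 / (norm S + 1)\<^sup>2 * (norm v)\<^sup>2 \<le> 1 / (norm S + 1)\<^sup>2 * ((norm S + 1)\<^sup>2 * (norm (T \<triangleright> v))\<^sup>2)"
    by (rule mult_left_mono) simp
  also have "\<dots> = (norm (T \<triangleright> v))\<^sup>2"
    using pos by simp
  also have "\<dots> = ((T' * T) \<triangleright> v) \<bullet> v"
    by (simp add: adjoint power2_norm_eq_inner)
  finally show "1 / (norm S + 1)\<^sup>2 * (norm v)\<^sup>2 \<le> ((T' * T) \<triangleright> v) \<bullet> v" .
qed

section \<open>Operators of the form \<open>P + j R\<close> with a central square root \<open>j\<close> of \<open>-1\<close>\<close>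

lemma normal_iff_commute:
  fixes j P R :: "'a::real_algebra_1"
  assumes jj: "j * j = -1" and jP: "j * P = P * j"
  shows "(P + j * R) * (P - j * R) = (P - j * R) * (P + j * R) \<longleftrightarrow> P * R = R * P"
proof -
  have Pj: "P * (j * X) = j * (P * X)" for X
    by (simp add: mult.assoc[symmetric] jP)
  have "(P + j * R) * (P - j * R) - (P - j * R) * (P + j * R) = 2 *\<^sub>R (j * (R * P - P * R))"
    by (simp add: algebra_simps scaleR_2 Pj)
  then have "(P + j * R) * (P - j * R) = (P - j * R) * (P + j * R) \<longleftrightarrow> j * (R * P - P * R) = 0"
    by (metis eq_iff_diff_eq_0 scaleR_eq_0_iff zero_neq_numeral)
  also have "\<dots> \<longleftrightarrow> P * R = R * P"
  proof
    assume "j * (R * P - P * R) = 0"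
    then have "j * (j * (R * P - P * R)) = 0" by simp
    then show "P * R = R * P" by (simp add: mult.assoc[symmetric] jj)
  qed simp
  finally show ?thesis .
qed

lemma gaussian_pair_coefficient:
  fixes j P R :: "'a::{real_normed_algebra_1,banach}"
  assumes jj: "j * j = -1" and jP: "j * P = P * j" and jR: "j * R = R * j" and PR: "P * R = R * P"
  defines "K1 \<equiv> - (j * P)" and "K2 \<equiv> - (j * R)"
  shows "exp (c *\<^sub>R (K1 * K1)) * K2 * exp (c *\<^sub>R (K2 * K2)) + j * K1 * exp (c *\<^sub>R (K1 * K1)) * exp (c *\<^sub>R (K2 * K2))
       = exp (c *\<^sub>R (- ((P - j * R) * (P + j * R)))) * (P - j * R)"
proof -
  note assoc = mult.assoc
  have swap: "P * j = j * P" "R * j = j * R" "R * P = P * R"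
    "P * (j * X) = j * (P * X)" "R * (j * X) = j * (R * X)" "R * (P * X) = P * (R * X)"
    "j * (j * X) = - X" for X
    using jj jP jR PR by (simp_all add: mult.assoc[symmetric])
  define E1 where "E1 = exp (c *\<^sub>R (- (P * P)))"
  define E2 where "E2 = exp (c *\<^sub>R (- (R * R)))"
  have K1: "K1 * K1 = - (P * P)" and K2: "K2 * K2 = - (R * R)" and jK1: "j * K1 = P"
    by (simp_all add: K1_def K2_def assoc swap)
  have "c *\<^sub>R (- (P * P)) * (c *\<^sub>R (- (R * R))) = c *\<^sub>R (- (R * R)) * (c *\<^sub>R (- (P * P)))"
    by (simp add: assoc swap)
  then have "E1 * E2 = exp (c *\<^sub>R (- (P * P)) + c *\<^sub>R (- (R * R)))"
    unfolding E1_def E2_def by (rule exp_add_commuting[symmetric])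
  also have "c *\<^sub>R (- (P * P)) + c *\<^sub>R (- (R * R)) = c *\<^sub>R (- ((P - j * R) * (P + j * R)))"
    by (simp add: algebra_simps assoc swap)
  finally have E12: "E1 * E2 = exp (c *\<^sub>R (- ((P - j * R) * (P + j * R))))" .
  have "K2 * (c *\<^sub>R (- (P * P))) = c *\<^sub>R (- (P * P)) * K2"
    by (simp add: K2_def assoc swap)
  then have K2E1: "E1 * K2 = K2 * E1"
    unfolding E1_def by (rule mult_exp_commute[symmetric])
  have "(P - j * R) * (c *\<^sub>R (- ((P - j * R) * (P + j * R))))
      = c *\<^sub>R (- ((P - j * R) * (P + j * R))) * (P - j * R)"
    by (simp add: algebra_simps assoc swap)
  then have commute: "(P - j * R) * exp (c *\<^sub>R (- ((P - j * R) * (P + j * R))))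
      = exp (c *\<^sub>R (- ((P - j * R) * (P + j * R)))) * (P - j * R)"
    by (rule mult_exp_commute)
  have "E1 * K2 * E2 + j * K1 * E1 * E2 = (K2 + j * K1) * (E1 * E2)"
    by (simp add: K2E1 algebra_simps)
  also have "\<dots> = (P - j * R) * exp (c *\<^sub>R (- ((P - j * R) * (P + j * R))))"
    by (simp add: E12 jK1 K2_def)
  finally show ?thesis
    unfolding K1 K2 E1_def E2_def commute .
qed

lemma csc_add: "csc c (X + Y) = csc c X + csc c Y"
  by (simp add: csc_def vec_eq_iff distrib_left)

lemma csc_csc: "csc c (csc d X) = csc (c * d) X"
  by (simp add: csc_def vec_eq_iff mult.assoc)

lemma csc_of_real: "csc (complex_of_real r) X = r *\<^sub>R X"
  by (simp add: csc_def vec_eq_iff complex_eq_iff)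

lemma csc_matrix_mult_left: "csc c M ** X = csc c (M ** X)"
  by (simp add: csc_def vec_eq_iff matrix_matrix_mult_def sum_distrib_left mult.assoc)

lemma csc_matrix_mult_right: "M ** csc c X = csc c (M ** X)"
  by (simp add: csc_def vec_eq_iff matrix_matrix_mult_def sum_distrib_left mult.left_commute)

lemma matrix_add_rdistrib: "(A + B) ** C = A ** C + B ** C"
  by (simp add: matrix_matrix_mult_def vec_eq_iff distrib_right sum.distrib)

lemma linear_matrix_mult_left: "linear (\<lambda>X. M ** (X :: complex^'n::finite^'n))"
  by (rule linearI) (simp_all add: matrix_add_ldistrib csc_of_real[symmetric] csc_matrix_mult_right)

lemma linear_matrix_mult_right: "linear (\<lambda>X. (X :: complex^'n::finite^'n) ** M)"
  by (rule linearI) (simp_all add: matrix_add_rdistrib csc_of_real[symmetric] csc_matrix_mult_left)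

lemma linear_csc: "linear (csc c)"
  by (rule linearI) (simp_all add: csc_add csc_of_real[symmetric] csc_csc mult.commute)

definition lmult_endo :: "complex^'n::finite^'n \<Rightarrow> (complex^'n^'n) endo" where
  "lmult_endo M = endo_of (\<lambda>X. M ** X)"

definition rmult_endo :: "complex^'n::finite^'n \<Rightarrow> (complex^'n^'n) endo" where
  "rmult_endo M = endo_of (\<lambda>X. X ** M)"

definition cmult_endo :: "complex \<Rightarrow> (complex^'n::finite^'n) endo" where
  "cmult_endo c = endo_of (csc c)"

definition sylvester_endo :: "complex^'n::finite^'n \<Rightarrow> complex^'n^'n \<Rightarrow> (complex^'n^'n) endo" where
  "sylvester_endo A B = lmult_endo A + rmult_endo B"

lemma lmult_endo_apply [simp]: "lmult_endo M \<triangleright> X = M ** X"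
  by (simp add: lmult_endo_def linear_matrix_mult_left)

lemma rmult_endo_apply [simp]: "rmult_endo M \<triangleright> X = X ** M"
  by (simp add: rmult_endo_def linear_matrix_mult_right)

lemma cmult_endo_apply [simp]: "cmult_endo c \<triangleright> X = csc c X"
  by (simp add: cmult_endo_def linear_csc)

lemma sylvester_endo_apply [simp]: "sylvester_endo A B \<triangleright> X = A ** X + X ** B"
  by (simp add: sylvester_endo_def)

lemma lmult_rmult_endo_commute: "lmult_endo M * rmult_endo N = rmult_endo N * lmult_endo M"
  by (rule endo_eqI) (simp add: matrix_mul_assoc)

lemma cmult_endo_commute:
  "cmult_endo c * lmult_endo M = lmult_endo M * cmult_endo c"
  "cmult_endo c * rmult_endo M = rmult_endo M * cmult_endo c"
  by (auto intro!: endo_eqI simp: csc_matrix_mult_left csc_matrix_mult_right)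

lemma lmult_endo_add: "lmult_endo (M + N) = lmult_endo M + lmult_endo N"
  by (rule endo_eqI) (simp add: matrix_add_rdistrib)

lemma rmult_endo_add: "rmult_endo (M + N) = rmult_endo M + rmult_endo N"
  by (rule endo_eqI) (simp add: matrix_add_ldistrib)

lemma lmult_endo_csc: "lmult_endo (csc c M) = cmult_endo c * lmult_endo M"
  by (rule endo_eqI) (simp add: csc_matrix_mult_left)

lemma rmult_endo_csc: "rmult_endo (csc c M) = cmult_endo c * rmult_endo M"
  by (rule endo_eqI) (simp add: csc_matrix_mult_right)

lemma sylvester_endo_add_csc:
  "sylvester_endo (M + csc c M') (N + csc c N') = sylvester_endo M N + cmult_endo c * sylvester_endo M' N'"
  by (simp add: sylvester_endo_def lmult_endo_add rmult_endo_add lmult_endo_csc rmult_endo_csc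
      algebra_simps)

lemma herm_skew_decomp: "A = herm_part A + csc \<i> (skew_part A)"
  by (simp add: herm_part_def skew_part_def csc_def vec_eq_iff field_simps)

lemma herm_skew_decomp_cadj: "cadj A = herm_part A + csc (- \<i>) (skew_part A)"
  by (simp add: herm_part_def skew_part_def csc_def vec_eq_iff field_simps)

lemma cmult_endo_uminus: "cmult_endo (- c) = - cmult_endo c"
  by (rule endo_eqI) (simp add: csc_def vec_eq_iff)

lemma cmult_endo_i_squared: "cmult_endo \<i> * cmult_endo \<i> = (-1 :: (complex^'n::finite^'n) endo)"
  by (rule endo_eqI) (simp add: csc_def vec_eq_iff)

lemma sylvester_endo_herm_skew:
  "sylvester_endo A B
     = sylvester_endo (herm_part A) (herm_part B) + cmult_endo \<i> * sylvester_endo (skew_part A) (skew_part B)"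
  by (subst (1 2) herm_skew_decomp) (rule sylvester_endo_add_csc)

lemma sylvester_endo_cadj_herm_skew:
  "sylvester_endo (cadj A) (cadj B)
     = sylvester_endo (herm_part A) (herm_part B) - cmult_endo \<i> * sylvester_endo (skew_part A) (skew_part B)"
  by (simp add: herm_skew_decomp_cadj sylvester_endo_add_csc cmult_endo_uminus)

lemma cmult_endo_sylvester_endo_commute:
  "cmult_endo c * sylvester_endo A B = sylvester_endo A B * cmult_endo c"
  by (simp add: sylvester_endo_def algebra_simps cmult_endo_commute)

lemma sylvester_endo_scaled:
  "sylvester_endo (csc a M + csc b M') (csc a N + csc b N')
     = cmult_endo a * sylvester_endo M N + cmult_endo b * sylvester_endo M' N'"
  by (simp add: sylvester_endo_def lmult_endo_add rmult_endo_add lmult_endo_csc rmult_endo_csc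
      algebra_simps)

section \<open>The matrix exponential as an operator exponential\<close>

lemma lmult_endo_power_apply: "lmult_endo M ^ k \<triangleright> X = mpow M k ** X"
  by (induction k) (simp_all add: matrix_mul_assoc)

lemma rmult_endo_power_apply: "rmult_endo M ^ k \<triangleright> X = X ** mpow M k"
proof -
  have "mpow M k ** M = M ** mpow M k" for k
    by (induction k) (simp_all add: matrix_mul_assoc[symmetric])
  then show ?thesis
    by (induction k) (simp_all add: matrix_mul_assoc[symmetric])
qed

lemma mexp_eq_exp_endo:
  assumes "\<And>k. L ^ k \<triangleright> mat 1 = mpow M k"
  shows "mexp M = exp L \<triangleright> mat 1"
proof -
  from bounded_linear_exp_sums[OF bounded_linear_endo_apply_left, of 1 L "mat 1"]
  have "(\<lambda>k. (1 / fact k) *\<^sub>R mpow M k) sums (exp L \<triangleright> mat 1)"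
    by (simp add: assms)
  then show ?thesis
    unfolding mexp_def by (rule sums_unique[symmetric])
qed

lemma mexp_matrix_mult_left: "mexp M ** X = exp (lmult_endo M) \<triangleright> X"
proof -
  have "rmult_endo X * exp (lmult_endo M) = exp (lmult_endo M) * rmult_endo X"
    by (rule mult_exp_commute) (rule lmult_rmult_endo_commute[symmetric])
  moreover have "mexp M = exp (lmult_endo M) \<triangleright> mat 1"
    by (rule mexp_eq_exp_endo) (simp add: lmult_endo_power_apply)
  ultimately have "mexp M ** X = (exp (lmult_endo M) * rmult_endo X) \<triangleright> mat 1"
    by (metis endo_apply_mult rmult_endo_apply)
  then show ?thesis by simp
qed

lemma mexp_matrix_mult_right: "X ** mexp M = exp (rmult_endo M) \<triangleright> X"
proof -
  have "lmult_endo X * exp (rmult_endo M) = exp (rmult_endo M) * lmult_endo X"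
    by (rule mult_exp_commute) (rule lmult_rmult_endo_commute)
  moreover have "mexp M = exp (rmult_endo M) \<triangleright> mat 1"
    by (rule mexp_eq_exp_endo) (simp add: rmult_endo_power_apply)
  ultimately have "X ** mexp M = (exp (rmult_endo M) * lmult_endo X) \<triangleright> mat 1"
    by (metis endo_apply_mult lmult_endo_apply)
  then show ?thesis by simp
qed

lemma mexp_sandwich: "mexp M ** C ** mexp N = exp (sylvester_endo M N) \<triangleright> C"
proof -
  have "mexp M ** C ** mexp N = (exp (rmult_endo N) * exp (lmult_endo M)) \<triangleright> C"
    by (simp add: mexp_matrix_mult_left mexp_matrix_mult_right)
  also have "exp (rmult_endo N) * exp (lmult_endo M) = exp (sylvester_endo M N)"
    unfolding sylvester_endo_def add.commute[of "lmult_endo M"]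
    by (rule exp_add_commuting[symmetric]) (rule lmult_rmult_endo_commute[symmetric])
  finally show ?thesis .
qed

section \<open>The Kronecker sum as the Sylvester operator\<close>

definition vec_of_mat :: "complex^'n::finite^'n \<Rightarrow> complex^('n \<times> 'n)" where
  "vec_of_mat X = (\<chi> p. X $ fst p $ snd p)"

definition mat_of_vec :: "complex^('n::finite \<times> 'n) \<Rightarrow> complex^'n^'n" where
  "mat_of_vec v = (\<chi> i j. v $ (i, j))"

lemma mat_of_vec_of_mat [simp]: "mat_of_vec (vec_of_mat X) = X"
  by (simp add: vec_of_mat_def mat_of_vec_def vec_eq_iff)

lemma vec_of_mat_of_vec [simp]: "vec_of_mat (mat_of_vec v) = v"
  by (simp add: vec_of_mat_def mat_of_vec_def vec_eq_iff)

lemma kron_sum_mult_vec_of_mat: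
  fixes A B X :: "complex^'n::finite^'n"
  shows "kron_sum A B *v vec_of_mat X = vec_of_mat (A ** X + X ** B)"
proof -
  have diag: "(\<Sum>k\<in>UNIV. \<Sum>l\<in>UNIV. if k = i then g k l else 0) = (\<Sum>l\<in>UNIV. g i l)"
    for i and g :: "'n \<Rightarrow> 'n \<Rightarrow> complex"
  proof -
    have "(\<Sum>k\<in>UNIV. \<Sum>l\<in>UNIV. if k = i then g k l else 0)
        = (\<Sum>k\<in>UNIV. if k = i then (\<Sum>l\<in>UNIV. g k l) else 0)"
      by (intro sum.cong refl) auto
    then show ?thesis by (simp add: sum.delta)
  qed
  have pairs: "(\<Sum>q\<in>UNIV. f q) = (\<Sum>k\<in>UNIV. \<Sum>l\<in>UNIV. f (k, l))" for f :: "'n \<times> 'n \<Rightarrow> complex"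
    by (simp add: sum.cartesian_product)
  have "(kron_sum A B *v vec_of_mat X) $ (i, j) = vec_of_mat (A ** X + X ** B) $ (i, j)" for i j
  proof -
    have "(kron_sum A B *v vec_of_mat X) $ (i, j)
        = (\<Sum>k\<in>UNIV. \<Sum>l\<in>UNIV. (A $ i $ k * (if j = l then 1 else 0)
                                + (if i = k then 1 else 0) * B $ l $ j) * X $ k $ l)"
      by (simp add: matrix_vector_mult_def kron_sum_def vec_of_mat_def pairs)
    also have "\<dots> = (\<Sum>k\<in>UNIV. \<Sum>l\<in>UNIV. (if l = j then A $ i $ k * X $ k $ l else 0)
                                        + (if k = i then X $ k $ l * B $ l $ j else 0))"
      by (intro sum.cong refl) (auto simp: algebra_simps)
    also have "\<dots> = (\<Sum>k\<in>UNIV. A $ i $ k * X $ k $ j) + (\<Sum>l\<in>UNIV. X $ i $ l * B $ l $ j)"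
      by (simp only: sum.distrib sum.delta sum.delta' finite UNIV_I if_True diag)
    finally show ?thesis
      by (simp add: vec_of_mat_def matrix_matrix_mult_def)
  qed
  then show ?thesis by (simp add: vec_eq_iff)
qed

lemma cadj_kron_sum: "cadj (kron_sum A B) = kron_sum (cadj A) (cadj B)"
  by (auto simp: vec_eq_iff cadj_def kron_sum_def)

lemma sylvester_endo_eq_kron_sum: "sylvester_endo A B \<triangleright> X = mat_of_vec (kron_sum A B *v vec_of_mat X)"
  by (simp add: kron_sum_mult_vec_of_mat)

lemma sylvester_endo_normal:
  fixes A B :: "complex^'n::finite^'n"
  assumes "normal_mat (kron_sum A B)"
  shows "sylvester_endo A B * sylvester_endo (cadj A) (cadj B) = sylvester_endo (cadj A) (cadj B) * sylvester_endo A B"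
  using assms
  by (intro endo_eqI) (simp add: sylvester_endo_eq_kron_sum matrix_vector_mul_assoc normal_mat_def
      cadj_kron_sum del: sylvester_endo_apply)

lemma sylvester_endo_invertible:
  fixes A B :: "complex^'n::finite^'n"
  assumes "invertible (kron_sum A B)"
  obtains S where "S * sylvester_endo A B = 1" "sylvester_endo A B * S = 1"
proof -
  obtain K where K: "kron_sum A B ** K = mat 1" "K ** kron_sum A B = mat 1"
    using assms unfolding invertible_def by blast
  have "linear (\<lambda>X. mat_of_vec (K *v vec_of_mat X))"
    by (rule linearI) (simp_all add: vec_eq_iff mat_of_vec_def vec_of_mat_def matrix_vector_mult_def
        sum.distrib distrib_left scaleR_sum_right)
  then show ?thesis
    by (intro that[of "endo_of (\<lambda>X. mat_of_vec (K *v vec_of_mat X))"] endo_eqI)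
      (simp_all add: sylvester_endo_eq_kron_sum matrix_vector_mul_assoc K del: sylvester_endo_apply)
qed

lemma inner_complex_matrix:
  "X \<bullet> Y = Re (\<Sum>i\<in>UNIV. \<Sum>j\<in>UNIV. X $ i $ j * cnj (Y $ i $ j))"
  by (simp add: inner_vec_def inner_complex_def Re_sum)

lemma inner_matrix_mult_cadj_left: "(cadj M ** U) \<bullet> V = U \<bullet> (M ** (V :: complex^'n::finite^'n))"
proof -
  define f where "f i j k = cnj (M $ k $ i) * U $ k $ j * cnj (V $ i $ j)" for i j k
  have "(cadj M ** U) \<bullet> V = Re (\<Sum>i\<in>UNIV. \<Sum>j\<in>UNIV. \<Sum>k\<in>UNIV. f i j k)"
    by (simp add: inner_complex_matrix matrix_matrix_mult_def cadj_def f_def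
        sum_distrib_right)
  also have "(\<Sum>i\<in>UNIV. \<Sum>j\<in>UNIV. \<Sum>k\<in>UNIV. f i j k) = (\<Sum>i\<in>UNIV. \<Sum>k\<in>UNIV. \<Sum>j\<in>UNIV. f i j k)"
    by (rule sum.cong[OF refl], rule sum.swap)
  also have "\<dots> = (\<Sum>k\<in>UNIV. \<Sum>i\<in>UNIV. \<Sum>j\<in>UNIV. f i j k)"
    by (rule sum.swap)
  also have "\<dots> = (\<Sum>k\<in>UNIV. \<Sum>j\<in>UNIV. \<Sum>i\<in>UNIV. f i j k)"
    by (rule sum.cong[OF refl], rule sum.swap)
  also have "Re \<dots> = U \<bullet> (M ** V)"
    by (simp add: inner_complex_matrix matrix_matrix_mult_def f_def
        sum_distrib_left mult_ac)
  finally show ?thesis .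
qed

lemma inner_matrix_mult_cadj_right: "(U ** cadj N) \<bullet> V = U \<bullet> (V ** (N :: complex^'n::finite^'n))"
proof -
  define g where "g i j l = U $ i $ l * cnj (N $ j $ l) * cnj (V $ i $ j)" for i j l
  have "(U ** cadj N) \<bullet> V = Re (\<Sum>i\<in>UNIV. \<Sum>j\<in>UNIV. \<Sum>l\<in>UNIV. g i j l)"
    by (simp add: inner_complex_matrix matrix_matrix_mult_def cadj_def g_def
        sum_distrib_right)
  also have "(\<Sum>i\<in>UNIV. \<Sum>j\<in>UNIV. \<Sum>l\<in>UNIV. g i j l) = (\<Sum>i\<in>UNIV. \<Sum>l\<in>UNIV. \<Sum>j\<in>UNIV. g i j l)"
    by (rule sum.cong[OF refl], rule sum.swap)
  also have "Re \<dots> = U \<bullet> (V ** N)"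
    by (simp add: inner_complex_matrix matrix_matrix_mult_def g_def
        sum_distrib_left mult_ac)
  finally show ?thesis .
qed

lemma inner_sylvester_endo_cadj: "(sylvester_endo (cadj A) (cadj B) \<triangleright> U) \<bullet> V = U \<bullet> (sylvester_endo A B \<triangleright> V)"
  by (simp add: inner_add_left inner_add_right inner_matrix_mult_cadj_left inner_matrix_mult_cadj_right)

lemma normal_kron_sum_herm_skew_commute:
  fixes A B :: "complex^'n::finite^'n"
  assumes "normal_mat (kron_sum A B)"
  shows "sylvester_endo (herm_part A) (herm_part B) * sylvester_endo (skew_part A) (skew_part B)
       = sylvester_endo (skew_part A) (skew_part B) * sylvester_endo (herm_part A) (herm_part B)"
  using sylvester_endo_normal[OF assms]
  unfolding sylvester_endo_herm_skew[of A B] sylvester_endo_cadj_herm_skew[of A B]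
    normal_iff_commute[OF cmult_endo_i_squared cmult_endo_sylvester_endo_commute] .

definition sylvester_integrand ::
    "complex^'n::finite^'n \<Rightarrow> complex^'n^'n \<Rightarrow> complex^'n^'n \<Rightarrow> real \<Rightarrow> real \<Rightarrow> real \<Rightarrow> complex^'n^'n"
  where "sylvester_integrand A B C t w w' =
    csc (complex_of_real (exp (- (w\<^sup>2 + w'\<^sup>2) / 2)) * (\<i> * w + w'))
      (mexp (csc (- \<i> * w * t) (herm_part A) + csc (- \<i> * w' * t) (skew_part A))
       ** C **
       mexp (csc (- \<i> * w * t) (herm_part B) + csc (- \<i> * w' * t) (skew_part B)))"

lemma csc_gaussian_weight:
  "csc (complex_of_real e * (\<i> * complex_of_real w + complex_of_real w')) X
     = e *\<^sub>R ((w' *\<^sub>R 1 + w *\<^sub>R cmult_endo \<i>) \<triangleright> X)"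
  by (simp add: csc_def vec_eq_iff, simp add: scaleR_conv_of_real algebra_simps)

lemma cmult_endo_neg_i_scaled:
  "cmult_endo (- \<i> * complex_of_real x * complex_of_real y) = (x * y) *\<^sub>R (- cmult_endo \<i>)"
  by (rule endo_eqI) (simp add: csc_def vec_eq_iff, simp add: scaleR_conv_of_real algebra_simps)

lemma sylvester_integrand_eq:
  fixes A B C :: "complex^'n::finite^'n" and t w w' :: real
  defines "P \<equiv> sylvester_endo (herm_part A) (herm_part B)"
    and "R \<equiv> sylvester_endo (skew_part A) (skew_part B)" and "j \<equiv> cmult_endo \<i>"
  assumes PR: "P * R = R * P"
  shows "sylvester_integrand A B C t w w'
       = (exp (- w\<^sup>2 / 2) * exp (- w'\<^sup>2 / 2)) *\<^sub>R
           (((w' *\<^sub>R 1 + w *\<^sub>R j) * exp ((w * t) *\<^sub>R (- (j * P))) * exp ((w' * t) *\<^sub>R (- (j * R))))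
              \<triangleright> C)"
proof -
  have "(w * t) *\<^sub>R (- (j * P)) * ((w' * t) *\<^sub>R (- (j * R)))
      = (w' * t) *\<^sub>R (- (j * R)) * ((w * t) *\<^sub>R (- (j * P)))"
  proof -
    have "P * (j * X) = j * (P * X)" and "R * (j * X) = j * (R * X)" for X
      unfolding P_def R_def j_def
      by (simp_all add: mult.assoc[symmetric] cmult_endo_sylvester_endo_commute)
    then have "j * P * (j * R) = j * R * (j * P)"
      by (simp add: mult.assoc PR)
    then show ?thesis by (simp add: mult.commute)
  qed
  then have exp_split: "exp ((w * t) *\<^sub>R (- (j * P)) + (w' * t) *\<^sub>R (- (j * R)))
      = exp ((w * t) *\<^sub>R (- (j * P))) * exp ((w' * t) *\<^sub>R (- (j * R)))"
    by (rule exp_add_commuting)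
  have "sylvester_endo (csc (- \<i> * w * t) (herm_part A) + csc (- \<i> * w' * t) (skew_part A))
      (csc (- \<i> * w * t) (herm_part B) + csc (- \<i> * w' * t) (skew_part B))
      = (w * t) *\<^sub>R (- (j * P)) + (w' * t) *\<^sub>R (- (j * R))"
    unfolding sylvester_endo_scaled cmult_endo_neg_i_scaled P_def R_def j_def by simp
  then have sandwich: "mexp (csc (- \<i> * w * t) (herm_part A) + csc (- \<i> * w' * t) (skew_part A))
            ** C **
            mexp (csc (- \<i> * w * t) (herm_part B) + csc (- \<i> * w' * t) (skew_part B))
      = (exp ((w * t) *\<^sub>R (- (j * P))) * exp ((w' * t) *\<^sub>R (- (j * R)))) \<triangleright> C"
    by (simp only: mexp_sandwich exp_split)
  moreover have weight: "csc (complex_of_real (exp (- (w\<^sup>2 + w'\<^sup>2) / 2)) * (\<i> * w + w')) Y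
      = (exp (- w\<^sup>2 / 2) * exp (- w'\<^sup>2 / 2)) *\<^sub>R ((w' *\<^sub>R 1 + w *\<^sub>R j) \<triangleright> Y)" for Y
  proof -
    have "exp (- (w\<^sup>2 + w'\<^sup>2) / 2) = exp (- w\<^sup>2 / 2) * exp (- w'\<^sup>2 / 2)"
      by (simp add: exp_add[symmetric] field_simps)
    then show ?thesis
      by (simp only: csc_gaussian_weight j_def)
  qed
  ultimately show ?thesis
    unfolding sylvester_integrand_def sandwich weight by (simp only: endo_apply_mult)
qed

lemma has_integral_sylvester_integrand_inner:
  fixes A B C :: "complex^'n::finite^'n"
  assumes "sylvester_endo (herm_part A) (herm_part B) * sylvester_endo (skew_part A) (skew_part B)
         = sylvester_endo (skew_part A) (skew_part B) * sylvester_endo (herm_part A) (herm_part B)"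
  shows "(\<lambda>w'. sylvester_integrand A B C t w w') integrable_on UNIV"
    and "((\<lambda>w. integral UNIV (\<lambda>w'. sylvester_integrand A B C t w w'))
          has_integral (2 * pi) *\<^sub>R t *\<^sub>R
            ((exp ((t\<^sup>2 / 2) *\<^sub>R (- (sylvester_endo (cadj A) (cadj B) * sylvester_endo A B)))
              * sylvester_endo (cadj A) (cadj B)) \<triangleright> C)) UNIV"
proof -
  define P where "P = sylvester_endo (herm_part A) (herm_part B)"
  define R where "R = sylvester_endo (skew_part A) (skew_part B)"
  define j :: "(complex^'n^'n) endo" where "j = cmult_endo \<i>"
  have PR: "P * R = R * P" using assms by (simp add: P_def R_def)
  have integrand: "sylvester_integrand A B C t w w'
      = (exp (- w\<^sup>2 / 2) * exp (- w'\<^sup>2 / 2)) *\<^sub>R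
          (((w' *\<^sub>R 1 + w *\<^sub>R j) * exp ((w * t) *\<^sub>R (- (j * P))) * exp ((w' * t) *\<^sub>R (- (j * R)))) \<triangleright> C)"
    for w w'
    unfolding P_def R_def j_def by (rule sylvester_integrand_eq[OF assms])
  show "(\<lambda>w'. sylvester_integrand A B C t w w') integrable_on UNIV"
    unfolding integrand using has_integral_gaussian_pair_inner[OF bounded_linear_endo_apply_left] by blast
  have T: "sylvester_endo A B = P + j * R" and T': "sylvester_endo (cadj A) (cadj B) = P - j * R"
    unfolding P_def R_def j_def by (rule sylvester_endo_herm_skew sylvester_endo_cadj_herm_skew)+
  have "j * j = -1" "j * P = P * j" "j * R = R * j"
    by (simp_all add: j_def P_def R_def cmult_endo_i_squared cmult_endo_sylvester_endo_commute)
  note coefficient = gaussian_pair_coefficient[OF this PR, of "t\<^sup>2 / 2"]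
  show "((\<lambda>w. integral UNIV (\<lambda>w'. sylvester_integrand A B C t w w'))
          has_integral (2 * pi) *\<^sub>R t *\<^sub>R
            ((exp ((t\<^sup>2 / 2) *\<^sub>R (- (sylvester_endo (cadj A) (cadj B) * sylvester_endo A B)))
              * sylvester_endo (cadj A) (cadj B)) \<triangleright> C)) UNIV"
    unfolding integrand T T' coefficient[symmetric]
    by (rule has_integral_gaussian_pair[OF bounded_linear_endo_apply_left])
qed

lemma has_integral_sylvester_integrand:
  fixes A B C X :: "complex^'n::finite^'n"
  defines "T \<equiv> sylvester_endo A B" and "T' \<equiv> sylvester_endo (cadj A) (cadj B)"
  assumes commute: "sylvester_endo (herm_part A) (herm_part B) * sylvester_endo (skew_part A) (skew_part B)
         = sylvester_endo (skew_part A) (skew_part B) * sylvester_endo (herm_part A) (herm_part B)"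
    and coercive: "\<And>v. c * (norm v)\<^sup>2 \<le> ((T' * T) \<triangleright> v) \<bullet> v" and "0 < c"
    and solution: "A ** X + X ** B = C"
  shows "((\<lambda>t. integral UNIV (\<lambda>w. integral UNIV (\<lambda>w'. sylvester_integrand A B C t w w')))
          has_integral (2 * pi) *\<^sub>R X) {0..}"
proof -
  have "C = T \<triangleright> X"
    using solution by (simp add: T_def)
  then have "(exp ((t\<^sup>2 / 2) *\<^sub>R (- (T' * T))) * T') \<triangleright> C
      = exp ((t\<^sup>2 / 2) *\<^sub>R (- (T' * T))) \<triangleright> (T' * T) \<triangleright> X" for t
    by (simp only: endo_apply_mult[symmetric] mult.assoc)
  then have "integral UNIV (\<lambda>w. integral UNIV (\<lambda>w'. sylvester_integrand A B C t w w'))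
      = (2 * pi) *\<^sub>R t *\<^sub>R exp ((t\<^sup>2 / 2) *\<^sub>R (- (T' * T))) \<triangleright> (T' * T) \<triangleright> X" for t
    using integral_unique[OF has_integral_sylvester_integrand_inner(2)[OF commute]]
    by (simp only: T_def T'_def)
  with has_integral_cmul[OF has_integral_heat_semigroup_coercive[OF coercive \<open>0 < c\<close>], of "2 * pi"]
  show ?thesis by simp
qed

theorem mainTheorem11:
  fixes A B C :: "complex^'n::finite^'n"
  assumes "normal_mat (kron_sum A B)" and "invertible (kron_sum A B)"
  defines "F \<equiv> (\<lambda>(t::real) (\<omega>::real) (\<omega>'::real).
              csc (complex_of_real (exp (- (\<omega>\<^sup>2 + \<omega>'\<^sup>2) / 2)) * (\<i> * \<omega> + \<omega>'))
              (mexp (csc (- \<i> * \<omega> * t) (herm_part A) + csc (- \<i> * \<omega>' * t) (skew_part A))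
               ** C **
               mexp (csc (- \<i> * \<omega> * t) (herm_part B) + csc (- \<i> * \<omega>' * t) (skew_part B))))"
  shows "(\<exists>!X. A ** X + X ** B = C) \<and>
         (\<forall>X. A ** X + X ** B = C \<longrightarrow>
            (\<forall>t \<omega>. (\<lambda>\<omega>'. F t \<omega> \<omega>') integrable_on UNIV) \<and>
            (\<forall>t. (\<lambda>\<omega>. integral UNIV (\<lambda>\<omega>'. F t \<omega> \<omega>')) integrable_on UNIV) \<and>
            (\<lambda>t. integral UNIV (\<lambda>\<omega>. integral UNIV (\<lambda>\<omega>'. F t \<omega> \<omega>'))) integrable_on {0..} \<and>
            X = (1 / (2 * pi)) *\<^sub>R
                  integral {0..} (\<lambda>t. integral UNIV (\<lambda>\<omega>. integral UNIV (\<lambda>\<omega>'. F t \<omega> \<omega>'))))"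
proof -
  note commute = normal_kron_sum_herm_skew_commute[OF assms(1)]
  obtain S where S: "S * sylvester_endo A B = 1" "sylvester_endo A B * S = 1"
    using sylvester_endo_invertible[OF assms(2)] by blast
  obtain c where c: "0 < c"
    "\<And>v. c * (norm v)\<^sup>2 \<le> ((sylvester_endo (cadj A) (cadj B) * sylvester_endo A B) \<triangleright> v) \<bullet> v"
    using coercive_adjoint_mult_self[OF inner_sylvester_endo_cadj S(1)] by blast
  have solves: "A ** X + X ** B = C \<longleftrightarrow> X = S \<triangleright> C" for X
    using S by (metis endo_apply_mult endo_apply_one sylvester_endo_apply)
  have F: "F = sylvester_integrand A B C"
    by (simp add: F_def sylvester_integrand_def fun_eq_iff)
  show ?thesis
  proof (intro conjI allI impI)
    show "\<exists>!X. A ** X + X ** B = C"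
      using solves by auto
    fix X assume "A ** X + X ** B = C"
    note outer = has_integral_sylvester_integrand[OF commute c(2,1) this]
    show "(\<lambda>\<omega>'. F t \<omega> \<omega>') integrable_on UNIV" for t \<omega>
      using has_integral_sylvester_integrand_inner(1)[OF commute] by (simp add: F)
    show "(\<lambda>\<omega>. integral UNIV (\<lambda>\<omega>'. F t \<omega> \<omega>')) integrable_on UNIV" for t
      using has_integral_sylvester_integrand_inner(2)[OF commute] by (auto simp: F)
    show "(\<lambda>t. integral UNIV (\<lambda>\<omega>. integral UNIV (\<lambda>\<omega>'. F t \<omega> \<omega>'))) integrable_on {0..}"
      using outer by (auto simp: F)
    show "X = (1 / (2 * pi)) *\<^sub>R integral {0..} (\<lambda>t. integral UNIV (\<lambda>\<omega>. integral UNIV (\<lambda>\<omega>'. F t \<omega> \<omega>')))"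
      using integral_unique[OF outer] by (simp add: F)
  qed
qed

end
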